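(* For all $f,g\in C[0,1]$, $$ \left|\int_0^1 f(x)g(x)\,dx-\int_0^1f(x)\,dx\int_0^1g(x)\,dx\right|\le\frac14\,\widetilde{\omega}\left(f;\frac1{\sqrt3}\right)\widetilde{\omega}\left(g;\frac1{\sqrt3}\right), $$ and if moreover $f',g'\in L_\infty[0,1]$ then the left-hand side is at most $\frac1{12}\|f'\|_{L_\infty}\|g'\|_{L_\infty}$.
   Context: For $f\in C[0,1]$, $\omega(f;t)=\sup\{|f(x)-f(y)|:x,y\in[0,1],|x-y|\le t\}$ is the first-order modulus of continuity, and $\widetilde{\omega}(f;t)=\sup_{0\le x\le t\le y\le1,\,x\ne y}\frac{(t-x)\omega(f,y)+(y-t)\omega(f,x)}{y-x}$ for $0\le t\le1$, $\widetilde{\omega}(f;t)=\omega(f,1)$ for $t>1$ (its least concave majorant). *)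

theory Defs
  imports "HOL-Analysis.Analysis"
begin

definition modcont :: "(real \<Rightarrow> real) \<Rightarrow> real \<Rightarrow> real" where
  "modcont f t = Sup {\<bar>f x - f y\<bar> | x y. x \<in> {0..1} \<and> y \<in> {0..1} \<and> \<bar>x - y\<bar> \<le> t}"

text \<open>Least concave majorant of the modulus of continuity.\<close>
definition modcont_tilde :: "(real \<Rightarrow> real) \<Rightarrow> real \<Rightarrow> real" where
  "modcont_tilde f t =
     (if t > 1 then modcont f 1
      else Sup {((t - x) * modcont f y + (y - t) * modcont f x) / (y - x) | x y.
                  0 \<le> x \<and> x \<le> t \<and> t \<le> y \<and> y \<le> 1 \<and> x \<noteq> y})"

end

theory Submission
  imports Defs
begin

(* Read T(f,g) = \<integral>fg - \<integral>f \<integral>g as the covariance of f and g, viewed as random variables on [0,1]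
   with Lebesgue measure.  By Cauchy-Schwarz it suffices to bound the standard deviation
   \<sigma>(f) = sqrt T(f,f) by half of \<omega>~(f; 1/sqrt 3).  Since \<omega>~(f;\<cdot>) is a concave majorant of the
   modulus of continuity, it has a supporting line at t = 1/sqrt 3, which gives
   |f x - f y| \<le> \<alpha> + \<beta> |x - y| with \<alpha> + \<beta>/sqrt 3 = \<omega>~(f; 1/sqrt 3).  The inf-convolution
   r x = inf_y (f y + \<beta> |x - y|) is \<beta>-Lipschitz with 0 \<le> f - r \<le> \<alpha>, so
   \<sigma>(f) \<le> \<sigma>(f - r) + \<sigma>(r) \<le> \<alpha>/2 + \<beta>/(2 sqrt 3), where \<sigma>(r)^2 \<le> \<integral> \<beta>^2 (x - 1/2)^2 = \<beta>^2/12.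
   The second estimate is the Lipschitz bound alone, with \<beta> = \<parallel>f'\<parallel>\<^sub>\<infinity>. *)

definition covariance :: "(real \<Rightarrow> real) \<Rightarrow> (real \<Rightarrow> real) \<Rightarrow> real" where
  "covariance u v = integral {0..1} (\<lambda>x. u x * v x) - integral {0..1} u * integral {0..1} v"

definition std_dev :: "(real \<Rightarrow> real) \<Rightarrow> real" where
  "std_dev u = sqrt (covariance u u)"

lemma covariance_commute: "covariance u v = covariance v u"
  unfolding covariance_def by (simp add: mult.commute)

lemma covariance_add_scaled_left:
  assumes u: "continuous_on {0..1} u" and v: "continuous_on {0..1} v" and w: "continuous_on {0..1} w"
  shows "covariance (\<lambda>x. u x + c * v x) w = covariance u w + c * covariance v w"
proof -
  have "integral {0..1} (\<lambda>x. (u x + c * v x) * w x)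
      = integral {0..1} (\<lambda>x. u x * w x) + c * integral {0..1} (\<lambda>x. v x * w x)"
    using u v w by (simp add: distrib_right mult.assoc integral_add integrable_continuous_interval
        continuous_on_mult)
  moreover have "integral {0..1} (\<lambda>x. u x + c * v x) = integral {0..1} u + c * integral {0..1} v"
    by (subst integral_add) (auto intro!: integrable_continuous_interval continuous_intros u v)
  ultimately show ?thesis
    unfolding covariance_def by (simp add: algebra_simps)
qed

lemma covariance_self_eq:
  assumes u: "continuous_on {0..1} u"
  shows "covariance u u = integral {0..1} (\<lambda>x. (u x - c)^2) - (integral {0..1} u - c)^2"
proof -
  have "integral {0..1} (\<lambda>x. (u x - c)^2)
      = integral {0..1} (\<lambda>x. u x * u x + ((-2 * c) * u x + c^2))"
    by (simp add: power2_eq_square algebra_simps)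
  also have "\<dots> = integral {0..1} (\<lambda>x. u x * u x) + integral {0..1} (\<lambda>x. (-2 * c) * u x + c^2)"
    by (subst integral_add) (auto intro!: integrable_continuous_interval continuous_intros u)
  also have "integral {0..1} (\<lambda>x. (-2 * c) * u x + c^2) = -2 * c * integral {0..1} u + c^2"
    by (subst integral_add) (auto intro!: integrable_continuous_interval continuous_intros u)
  finally show ?thesis
    unfolding covariance_def by (simp add: power2_eq_square algebra_simps)
qed

lemma covariance_self_le:
  assumes u: "continuous_on {0..1} u" and h: "continuous_on {0..1} h"
    and le: "\<And>x. x \<in> {0..1} \<Longrightarrow> (u x - c)^2 \<le> h x"
  shows "covariance u u \<le> integral {0..1} h"
proof -
  have "integral {0..1} (\<lambda>x. (u x - c)^2) \<le> integral {0..1} h"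
    using u h le by (intro integral_le) (auto intro!: integrable_continuous_interval continuous_intros)
  then show ?thesis
    unfolding covariance_self_eq[OF u, of c] by (smt (verit) zero_le_power2)
qed

lemma covariance_self_nonneg:
  assumes "continuous_on {0..1} u"
  shows "0 \<le> covariance u u"
proof -
  have "0 \<le> integral {0..1} (\<lambda>x. (u x - integral {0..1} u)^2)"
    by (rule integral_nonneg) (auto intro!: integrable_continuous_interval continuous_intros assms)
  then show ?thesis
    unfolding covariance_self_eq[OF assms, of "integral {0..1} u"] by simp
qed

lemma std_dev_nonneg: "continuous_on {0..1} u \<Longrightarrow> 0 \<le> std_dev u"
  unfolding std_dev_def by (simp add: covariance_self_nonneg)

lemma square_le_of_quadratic_nonneg:
  fixes p q r :: real
  assumes "0 \<le> q" and nonneg: "\<And>l. 0 \<le> p + 2 * l * r + l^2 * q"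
  shows "r^2 \<le> p * q"
proof (cases "q = 0")
  case False
  then have "q > 0" using assms(1) by simp
  have "0 \<le> p + 2 * (-r/q) * r + (-r/q)^2 * q" by (rule nonneg)
  also have "\<dots> = p - r^2/q" using \<open>q > 0\<close> by (simp add: power2_eq_square field_simps)
  finally show ?thesis using \<open>q > 0\<close> by (simp add: field_simps)
next
  case True
  show ?thesis
  proof (cases "r = 0")
    case False
    have "0 \<le> p + 2 * (-(p+1)/(2*r)) * r + (-(p+1)/(2*r))^2 * q" by (rule nonneg)
    also have "\<dots> = -1" using False True by (simp add: field_simps)
    finally show ?thesis by simp
  qed (simp add: True)
qed

lemma covariance_self_add_scaled:
  assumes u: "continuous_on {0..1} u" and v: "continuous_on {0..1} v"
  shows "covariance (\<lambda>x. u x + l * v x) (\<lambda>x. u x + l * v x)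
      = covariance u u + 2 * l * covariance u v + l^2 * covariance v v"
proof -
  have uv: "continuous_on {0..1} (\<lambda>x. u x + l * v x)" using u v by (intro continuous_intros)
  have "covariance (\<lambda>x. u x + l * v x) (\<lambda>x. u x + l * v x)
      = covariance u (\<lambda>x. u x + l * v x) + l * covariance v (\<lambda>x. u x + l * v x)"
    by (rule covariance_add_scaled_left[OF u v uv])
  also have "covariance u (\<lambda>x. u x + l * v x) = covariance u u + l * covariance u v"
    using covariance_add_scaled_left[OF u v u] by (simp add: covariance_commute)
  also have "covariance v (\<lambda>x. u x + l * v x) = covariance u v + l * covariance v v"
    using covariance_add_scaled_left[OF u v v] by (simp add: covariance_commute)
  finally show ?thesis
    by (simp add: power2_eq_square algebra_simps)
qed

lemma covariance_Cauchy_Schwarz: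
  assumes u: "continuous_on {0..1} u" and v: "continuous_on {0..1} v"
  shows "\<bar>covariance u v\<bar> \<le> std_dev u * std_dev v"
proof -
  have "(covariance u v)^2 \<le> covariance u u * covariance v v"
  proof (rule square_le_of_quadratic_nonneg[OF covariance_self_nonneg[OF v]])
    fix l
    have "continuous_on {0..1} (\<lambda>x. u x + l * v x)" using u v by (intro continuous_intros)
    then show "0 \<le> covariance u u + 2 * l * covariance u v + l^2 * covariance v v"
      using covariance_self_nonneg covariance_self_add_scaled[OF u v] by metis
  qed
  then have "sqrt ((covariance u v)^2) \<le> sqrt (covariance u u * covariance v v)"
    by (rule real_sqrt_le_mono)
  then show ?thesis
    unfolding std_dev_def by (simp add: real_sqrt_mult)
qed

lemma std_dev_add:
  assumes u: "continuous_on {0..1} u" and v: "continuous_on {0..1} v"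
  shows "std_dev (\<lambda>x. u x + v x) \<le> std_dev u + std_dev v"
proof -
  have "covariance (\<lambda>x. u x + v x) (\<lambda>x. u x + v x)
      = covariance u u + 2 * covariance u v + covariance v v"
    using covariance_self_add_scaled[OF u v, of 1] by simp
  also have "\<dots> \<le> (std_dev u)^2 + 2 * (std_dev u * std_dev v) + (std_dev v)^2"
    using covariance_Cauchy_Schwarz[OF u v] covariance_self_nonneg[OF u] covariance_self_nonneg[OF v]
    unfolding std_dev_def by simp
  also have "\<dots> = (std_dev u + std_dev v)^2"
    by (simp add: power2_eq_square algebra_simps)
  finally show ?thesis
    unfolding std_dev_def[of "\<lambda>x. u x + v x"]
    by (rule real_le_lsqrt[rotated]) (simp add: std_dev_nonneg u v)
qed

lemma std_dev_le_of_bounded_deviation: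
  assumes u: "continuous_on {0..1} u" and dev: "\<And>x. x \<in> {0..1} \<Longrightarrow> \<bar>u x - c\<bar> \<le> A"
  shows "std_dev u \<le> A"
proof -
  have "0 \<le> A" using dev[of 0] by simp
  have "covariance u u \<le> integral {0..1} (\<lambda>_::real. A^2)"
  proof (rule covariance_self_le[OF u, where h="\<lambda>_. A^2" and c=c])
    fix x :: real assume "x \<in> {0..1}"
    then show "(u x - c)^2 \<le> A^2"
      using dev by (metis abs_ge_zero power2_abs power_mono)
  qed simp
  then show ?thesis
    unfolding std_dev_def using \<open>0 \<le> A\<close> by (intro real_le_lsqrt) auto
qed

lemma std_dev_lipschitz:
  assumes "\<beta>-lipschitz_on {0..1} r"
  shows "std_dev r \<le> \<beta> / (2 * sqrt 3)"
proof -
  have r: "continuous_on {0..1} r" using lipschitz_on_continuous_on[OF assms] .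
  have "0 \<le> \<beta>" using lipschitz_on_nonneg[OF assms] .
  have "((\<lambda>x. (x - 1/2)^2) has_integral ((1 - 1/2)^3/3 - (0 - 1/2)^3/3)) {0..1::real}"
    by (rule fundamental_theorem_of_calculus[where f="\<lambda>x. (x - 1/2)^3/3"])
       (auto intro!: derivative_eq_intros
         simp: has_real_derivative_iff_has_vector_derivative[symmetric] power2_eq_square)
  then have I: "integral {0..1} (\<lambda>x::real. (x - 1/2)^2) = 1/12"
    by (simp add: integral_unique power3_eq_cube)
  have "covariance r r \<le> integral {0..1} (\<lambda>x. \<beta>^2 * (x - 1/2)^2)"
  proof (rule covariance_self_le[OF r, of _ "r (1/2)"])
    fix x :: real assume "x \<in> {0..1}"
    then have "\<bar>r x - r (1/2)\<bar> \<le> \<bar>\<beta> * (x - 1/2)\<bar>"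
      using lipschitz_onD[OF assms, of x "1/2"] \<open>0 \<le> \<beta>\<close> by (simp add: dist_real_def abs_mult)
    then show "(r x - r (1/2))^2 \<le> \<beta>^2 * (x - 1/2)^2"
      by (simp add: abs_le_square_iff power_mult_distrib)
  qed (auto intro!: continuous_intros)
  also have "\<dots> = (\<beta> / (2 * sqrt 3))^2"
    unfolding integral_mult_right I by (simp add: power_divide power_mult_distrib)
  finally have "covariance r r \<le> (\<beta> / (2 * sqrt 3))^2" .
  then show ?thesis
    unfolding std_dev_def using \<open>0 \<le> \<beta>\<close> by (intro real_le_lsqrt) auto
qed

lemma lipschitz_minorant:
  fixes f :: "'a::metric_space \<Rightarrow> real"
  assumes "0 \<le> \<beta>" and near: "\<And>x y. x \<in> S \<Longrightarrow> y \<in> S \<Longrightarrow> f x - f y \<le> \<alpha> + \<beta> * dist x y"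
  obtains r where "\<beta>-lipschitz_on S r" "\<And>x. x \<in> S \<Longrightarrow> f x - \<alpha> \<le> r x" "\<And>x. x \<in> S \<Longrightarrow> r x \<le> f x"
proof
  define r where "r x = Inf ((\<lambda>y. f y + \<beta> * dist x y) ` S)" for x
  have bdd: "bdd_below ((\<lambda>y. f y + \<beta> * dist x y) ` S)" if "x \<in> S" for x
    using near[OF that] by (intro bdd_belowI2[of _ "f x - \<alpha>"]) (smt (verit))
  have r_le: "r x \<le> f y + \<beta> * dist x y" if "x \<in> S" "y \<in> S" for x y
    unfolding r_def using that bdd by (intro cInf_lower) auto
  have r_ge: "c \<le> r x" if "x \<in> S" "\<And>y. y \<in> S \<Longrightarrow> c \<le> f y + \<beta> * dist x y" for x c
    unfolding r_def using that by (intro cInf_greatest) auto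
  show "r x \<le> f x" if "x \<in> S" for x
    using r_le[OF that that] by simp
  show "f x - \<alpha> \<le> r x" if "x \<in> S" for x
    using near[OF that] that by (intro r_ge) (smt (verit))+
  have r_lip: "r x \<le> r x' + \<beta> * dist x x'" if "x \<in> S" "x' \<in> S" for x x'
  proof -
    have "r x - \<beta> * dist x x' \<le> r x'"
    proof (rule r_ge[OF that(2)])
      fix y assume "y \<in> S"
      have "\<beta> * dist x y \<le> \<beta> * dist x x' + \<beta> * dist x' y"
        using \<open>0 \<le> \<beta>\<close> dist_triangle[of x y x'] by (metis distrib_left mult_left_mono)
      then show "r x - \<beta> * dist x x' \<le> f y + \<beta> * dist x' y"
        using r_le[OF that(1) \<open>y \<in> S\<close>] by linarith
    qed
    then show ?thesis by linarith
  qed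
  show "\<beta>-lipschitz_on S r"
  proof (rule lipschitz_onI[OF _ \<open>0 \<le> \<beta>\<close>])
    fix x y assume "x \<in> S" "y \<in> S"
    then show "dist (r x) (r y) \<le> \<beta> * dist x y"
      using r_lip[of x y] r_lip[of y x] by (simp add: dist_real_def dist_commute abs_le_iff)
  qed
qed

lemma std_dev_near_lipschitz:
  assumes f: "continuous_on {0..1} f" and "0 \<le> \<beta>"
    and near: "\<And>x y. x \<in> {0..1} \<Longrightarrow> y \<in> {0..1} \<Longrightarrow> \<bar>f x - f y\<bar> \<le> \<alpha> + \<beta> * \<bar>x - y\<bar>"
  shows "std_dev f \<le> \<alpha> / 2 + \<beta> / (2 * sqrt 3)"
proof -
  obtain r where r: "\<beta>-lipschitz_on {0..1} r"
    and below: "\<And>x. x \<in> {0..1} \<Longrightarrow> f x - \<alpha> \<le> r x \<and> r x \<le> f x"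
    using lipschitz_minorant[OF \<open>0 \<le> \<beta>\<close>, of "{0..1}" f \<alpha>] near
    by (metis abs_le_iff dist_real_def)
  have rc: "continuous_on {0..1} r" using lipschitz_on_continuous_on[OF r] .
  have "std_dev f = std_dev (\<lambda>x. (f x - r x) + r x)" by simp
  also have "\<dots> \<le> std_dev (\<lambda>x. f x - r x) + std_dev r"
    using f rc by (intro std_dev_add continuous_intros)
  also have "std_dev (\<lambda>x. f x - r x) \<le> \<alpha> / 2"
  proof (rule std_dev_le_of_bounded_deviation[where c="\<alpha> / 2"])
    show "continuous_on {0..1} (\<lambda>x. f x - r x)" using f rc by (intro continuous_intros)
    fix x :: real assume "x \<in> {0..1}"
    then show "\<bar>f x - r x - \<alpha> / 2\<bar> \<le> \<alpha> / 2" using below[of x] by arith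
  qed
  also have "std_dev r \<le> \<beta> / (2 * sqrt 3)" using std_dev_lipschitz[OF r] .
  finally show ?thesis by simp
qed

lemma modcont_bdd_above:
  fixes f :: "real \<Rightarrow> real"
  assumes "continuous_on {0..1} f"
  shows "bdd_above {\<bar>f x - f y\<bar> | x y. x \<in> {0..1} \<and> y \<in> {0..1} \<and> \<bar>x - y\<bar> \<le> t}"
proof -
  have "compact (f ` {0..1})" using compact_continuous_image[OF assms compact_Icc] .
  then obtain M where M: "\<And>x. x \<in> {0..1} \<Longrightarrow> \<bar>f x\<bar> \<le> M"
    using compact_imp_bounded[of "f ` {0..1}"] unfolding bounded_iff real_norm_def by blast
  show ?thesis
  proof (rule bdd_aboveI[of _ "2 * M"])
    fix z assume "z \<in> {\<bar>f x - f y\<bar> | x y. x \<in> {0..1} \<and> y \<in> {0..1} \<and> \<bar>x - y\<bar> \<le> t}"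
    then obtain x y where "x \<in> {0..1}" "y \<in> {0..1}" "z = \<bar>f x - f y\<bar>" by blast
    then show "z \<le> 2 * M" using M[of x] M[of y] by linarith
  qed
qed

lemma modcont_ge:
  assumes "continuous_on {0..1} f" "x \<in> {0..1}" "y \<in> {0..1}" "\<bar>x - y\<bar> \<le> t"
  shows "\<bar>f x - f y\<bar> \<le> modcont f t"
  unfolding modcont_def using assms by (intro cSup_upper modcont_bdd_above) auto

lemma modcont_mono:
  assumes "continuous_on {0..1} f" "0 \<le> s" "s \<le> t"
  shows "modcont f s \<le> modcont f t"
  unfolding modcont_def using assms
  by (intro cSup_subset_mono modcont_bdd_above) (force+)

lemma modcont_tilde_ge_chord:
  assumes f: "continuous_on {0..1} f" and xy: "0 \<le> x" "x \<le> h" "h \<le> y" "y \<le> 1" "x \<noteq> y"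
  shows "((h - x) * modcont f y + (y - h) * modcont f x) / (y - x) \<le> modcont_tilde f h"
proof -
  let ?chord = "\<lambda>x y. ((h - x) * modcont f y + (y - h) * modcont f x) / (y - x)"
  have "?chord x' y' \<le> modcont f 1"
    if "0 \<le> x'" "x' \<le> h" "h \<le> y'" "y' \<le> 1" "x' \<noteq> y'" for x' y'
  proof -
    have "(h - x') * modcont f y' \<le> (h - x') * modcont f 1"
      "(y' - h) * modcont f x' \<le> (y' - h) * modcont f 1"
      using that by (auto intro!: mult_left_mono modcont_mono[OF f])
    moreover have "(h - x') * modcont f 1 + (y' - h) * modcont f 1 = (y' - x') * modcont f 1"
      by (simp add: algebra_simps)
    ultimately have "(h - x') * modcont f y' + (y' - h) * modcont f x' \<le> (y' - x') * modcont f 1"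
      by linarith
    then show ?thesis using that by (simp add: divide_le_eq mult.commute)
  qed
  then have "bdd_above {?chord x y | x y. 0 \<le> x \<and> x \<le> h \<and> h \<le> y \<and> y \<le> 1 \<and> x \<noteq> y}"
    by (intro bdd_aboveI[of _ "modcont f 1"]) auto
  then show ?thesis
    unfolding modcont_tilde_def using xy by (auto intro!: cSup_upper)
qed

lemma chord_slope_le:
  fixes wx wy a h x y :: real
  assumes "x < h" "h < y" "((h - x) * wy + (y - h) * wx) / (y - x) \<le> a"
  shows "(wy - a) / (y - h) \<le> (a - wx) / (h - x)"
proof -
  have "(h - x) * wy + (y - h) * wx \<le> a * (y - x)" using assms by (simp add: divide_le_eq)
  then have "(wy - a) * (h - x) \<le> (a - wx) * (y - h)" by (simp add: algebra_simps)
  then show ?thesis using assms by (simp add: field_simps)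
qed

lemma supporting_line_of_chord_bound:
  fixes w :: "real \<Rightarrow> real"
  assumes h: "0 < h" "h \<le> 1"
    and mono: "\<And>s t. 0 \<le> s \<Longrightarrow> s \<le> t \<Longrightarrow> w s \<le> w t"
    and chord: "\<And>x y. 0 \<le> x \<Longrightarrow> x \<le> h \<Longrightarrow> h \<le> y \<Longrightarrow> y \<le> 1 \<Longrightarrow> x \<noteq> y \<Longrightarrow>
                  ((h - x) * w y + (y - h) * w x) / (y - x) \<le> a"
  obtains \<alpha> \<beta> where "0 \<le> \<beta>" "\<alpha> + \<beta> * h = a" "\<And>t. 0 \<le> t \<Longrightarrow> t \<le> 1 \<Longrightarrow> w t \<le> \<alpha> + \<beta> * t"
proof -
  have wh: "w h \<le> a" using chord[of 0 h] h by simp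
  \<comment> \<open>\<beta> is the steepest slope from (h, a) to the graph of w on the right of h; the chord bound
     makes it no steeper than any slope from the graph on the left, so the line through (h, a)
     with slope \<beta> lies above w\<close>
  define B where "B = insert 0 {(w y - a) / (y - h) | y. h < y \<and> y \<le> 1}"
  define \<beta> where "\<beta> = Sup B"
  have slope_le: "(w y - a) / (y - h) \<le> (a - w x) / (h - x)" if "0 \<le> x" "x < h" "h < y" "y \<le> 1" for x y
    using that chord[of x y] by (intro chord_slope_le) auto
  have B_le: "b \<le> (a - w x) / (h - x)" if "b \<in> B" "0 \<le> x" "x < h" for b x
    using that slope_le wh mono[of x h] by (auto simp: B_def)
  have "bdd_above B" using B_le[of _ 0] h by (intro bdd_aboveI) auto
  then have slope_le_\<beta>: "(w y - a) / (y - h) \<le> \<beta>" if "h < y" "y \<le> 1" for y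
    unfolding \<beta>_def using that by (intro cSup_upper) (auto simp: B_def)
  have \<beta>_le: "\<beta> \<le> (a - w x) / (h - x)" if "0 \<le> x" "x < h" for x
    unfolding \<beta>_def using that by (intro cSup_least B_le) (auto simp: B_def)
  show ?thesis
  proof (rule that)
    show "0 \<le> \<beta>"
      unfolding \<beta>_def using \<open>bdd_above B\<close> by (intro cSup_upper) (auto simp: B_def)
    show "(a - \<beta> * h) + \<beta> * h = a" by simp
    fix t :: real assume t: "0 \<le> t" "t \<le> 1"
    consider "t < h" | "t = h" | "h < t" by linarith
    then show "w t \<le> a - \<beta> * h + \<beta> * t"
    proof cases
      case 1
      then show ?thesis using \<beta>_le[OF t(1) 1] by (simp add: field_simps)
    next
      case 3
      then show ?thesis using slope_le_\<beta>[OF 3 t(2)] by (simp add: field_simps)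
    qed (use wh in simp)
  qed
qed

lemma modcont_tilde_near_lipschitz:
  assumes f: "continuous_on {0..1} f" and h: "0 < h" "h \<le> 1"
  obtains \<alpha> \<beta> where "0 \<le> \<beta>" "\<alpha> + \<beta> * h = modcont_tilde f h"
    "\<And>x y. x \<in> {0..1} \<Longrightarrow> y \<in> {0..1} \<Longrightarrow> \<bar>f x - f y\<bar> \<le> \<alpha> + \<beta> * \<bar>x - y\<bar>"
proof -
  obtain \<alpha> \<beta> where "0 \<le> \<beta>" "\<alpha> + \<beta> * h = modcont_tilde f h"
    and line: "\<And>t. 0 \<le> t \<Longrightarrow> t \<le> 1 \<Longrightarrow> modcont f t \<le> \<alpha> + \<beta> * t"
    by (rule supporting_line_of_chord_bound[OF h, of "modcont f"])
      (use modcont_mono modcont_tilde_ge_chord f in auto)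
  moreover have "\<bar>f x - f y\<bar> \<le> \<alpha> + \<beta> * \<bar>x - y\<bar>" if "x \<in> {0..1}" "y \<in> {0..1}" for x y
  proof -
    have "\<bar>x - y\<bar> \<le> 1" using that by auto
    then have "modcont f \<bar>x - y\<bar> \<le> \<alpha> + \<beta> * \<bar>x - y\<bar>" using line[of "\<bar>x - y\<bar>"] by simp
    then show ?thesis using modcont_ge[OF f that order_refl] by linarith
  qed
  ultimately show ?thesis using that by blast
qed

lemma std_dev_le_modcont_tilde:
  assumes f: "continuous_on {0..1} f"
  shows "std_dev f \<le> modcont_tilde f (1 / sqrt 3) / 2"
proof -
  have "0 < 1 / sqrt 3" "1 / sqrt (3::real) \<le> 1" by (auto simp: divide_le_eq)
  then obtain \<alpha> \<beta> where "0 \<le> \<beta>" and split: "\<alpha> + \<beta> * (1 / sqrt 3) = modcont_tilde f (1 / sqrt 3)"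
    and near: "\<And>x y. x \<in> {0..1} \<Longrightarrow> y \<in> {0..1} \<Longrightarrow> \<bar>f x - f y\<bar> \<le> \<alpha> + \<beta> * \<bar>x - y\<bar>"
    using modcont_tilde_near_lipschitz[OF f] by metis
  have "std_dev f \<le> \<alpha> / 2 + \<beta> / (2 * sqrt 3)"
    by (rule std_dev_near_lipschitz[OF f \<open>0 \<le> \<beta>\<close> near])
  also have "\<dots> = modcont_tilde f (1 / sqrt 3) / 2"
    unfolding split[symmetric] by (simp add: field_simps)
  finally show ?thesis .
qed

lemma lipschitz_on_of_indefinite_integral:
  fixes f f' :: "real \<Rightarrow> real"
  assumes "a < b"
    and I: "\<And>x. x \<in> {a..b} \<Longrightarrow> (f' has_integral (f x - f a)) {a..x}"
    and N: "negligible N" and bound: "\<And>x. x \<in> {a..b} - N \<Longrightarrow> \<bar>f' x\<bar> \<le> M"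
  shows "M-lipschitz_on {a..b} f"
proof -
  have "\<not> {a..b} \<subseteq> N"
  proof
    assume "{a..b} \<subseteq> N"
    then have "negligible (cbox a b)" using negligible_subset[OF N] by (simp add: cbox_interval)
    then have "box a b = {}" using negligible_interval(1) by blast
    then show False using \<open>a < b\<close> by (simp add: box_real)
  qed
  then obtain z where "z \<in> {a..b} - N" by blast
  then have "0 \<le> M" using bound[of z] by linarith
  define g where "g t = (if t \<in> N then 0 else f' t)" for t
  have increment_le: "\<bar>f y - f x\<bar> \<le> M * (y - x)" if xy: "a \<le> x" "x \<le> y" "y \<le> b" for x y
  proof -
    have Iy: "(f' has_integral (f y - f a)) {a..y}" and Ix: "(f' has_integral (f x - f a)) {a..x}"
      using I xy by auto
    have "integral {a..x} f' + integral {x..y} f' = integral {a..y} f'"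
      using Iy xy by (intro Henstock_Kurzweil_Integration.integral_combine) auto
    then have val: "integral {x..y} f' = f y - f x"
      using integral_unique[OF Iy] integral_unique[OF Ix] by linarith
    have int: "f' integrable_on {x..y}"
      by (rule integrable_subinterval_real[OF has_integral_integrable[OF Iy]]) (use xy in auto)
    have f'_integral: "(f' has_integral (f y - f x)) (cbox x y)"
      using integrable_integral[OF int] by (simp add: val cbox_interval)
    have g_integral: "(g has_integral (f y - f x)) (cbox x y)"
      by (rule has_integral_spike[OF N _ f'_integral]) (simp add: g_def)
    have g_bound: "norm (g t) \<le> M" if "t \<in> cbox x y" for t
      using that xy bound[of t] \<open>0 \<le> M\<close> by (simp add: g_def cbox_interval)
    show ?thesis
      using has_integral_bound[OF \<open>0 \<le> M\<close> g_integral g_bound] xy by (simp add: cbox_interval)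
  qed
  show ?thesis
  proof (rule lipschitz_onI[OF _ \<open>0 \<le> M\<close>])
    fix x y assume "x \<in> {a..b}" "y \<in> {a..b}"
    then show "dist (f x) (f y) \<le> M * dist x y"
      using increment_le[of x y] increment_le[of y x]
      by (cases "x \<le> y") (simp_all add: dist_real_def abs_minus_commute)
  qed
qed

theorem mainTheorem8:
  fixes f g :: "real \<Rightarrow> real"
  assumes f: "continuous_on {0..1} f" and g: "continuous_on {0..1} g"
  shows "\<bar>integral {0..1} (\<lambda>x. f x * g x) - integral {0..1} f * integral {0..1} g\<bar>
           \<le> 1/4 * modcont_tilde f (1 / sqrt 3) * modcont_tilde g (1 / sqrt 3)
       \<and> (\<forall>(f' :: real \<Rightarrow> real) (g' :: real \<Rightarrow> real) (Mf :: real) (Mg :: real).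
           (\<forall>x\<in>{0..1}. (f' has_integral (f x - f 0)) {0..x}) \<and>
           (\<forall>x\<in>{0..1}. (g' has_integral (g x - g 0)) {0..x}) \<and>
           (\<exists>N. negligible N \<and> (\<forall>x\<in>{0..1} - N. \<bar>f' x\<bar> \<le> Mf)) \<and>
           (\<exists>N. negligible N \<and> (\<forall>x\<in>{0..1} - N. \<bar>g' x\<bar> \<le> Mg))
           \<longrightarrow> \<bar>integral {0..1} (\<lambda>x. f x * g x) - integral {0..1} f * integral {0..1} g\<bar>
                 \<le> 1/12 * Mf * Mg)"
proof -
  have cov: "integral {0..1} (\<lambda>x. f x * g x) - integral {0..1} f * integral {0..1} g = covariance f g"
    unfolding covariance_def ..
  have CS: "\<bar>covariance f g\<bar> \<le> std_dev f * std_dev g"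
    using covariance_Cauchy_Schwarz[OF f g] .
  have "std_dev f * std_dev g \<le> modcont_tilde f (1 / sqrt 3) / 2 * (modcont_tilde g (1 / sqrt 3) / 2)"
    using std_dev_le_modcont_tilde[OF f] std_dev_le_modcont_tilde[OF g] std_dev_nonneg[OF f] std_dev_nonneg[OF g]
    by (intro mult_mono) auto
  then have "\<bar>covariance f g\<bar> \<le> 1/4 * modcont_tilde f (1 / sqrt 3) * modcont_tilde g (1 / sqrt 3)"
    using CS by simp
  moreover have "\<bar>covariance f g\<bar> \<le> 1/12 * Mf * Mg"
    if "(\<forall>x\<in>{0..1}. (f' has_integral (f x - f 0)) {0..x}) \<and>
        (\<forall>x\<in>{0..1}. (g' has_integral (g x - g 0)) {0..x}) \<and>
        (\<exists>N. negligible N \<and> (\<forall>x\<in>{0..1} - N. \<bar>f' x\<bar> \<le> Mf)) \<and>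
        (\<exists>N. negligible N \<and> (\<forall>x\<in>{0..1} - N. \<bar>g' x\<bar> \<le> Mg))" for f' g' Mf Mg
  proof -
    have lip_f: "Mf-lipschitz_on {0..1} f" and lip_g: "Mg-lipschitz_on {0..1} g"
      using that by (auto intro: lipschitz_on_of_indefinite_integral[of 0 1])
    have "std_dev f * std_dev g \<le> Mf / (2 * sqrt 3) * (Mg / (2 * sqrt 3))"
      using std_dev_lipschitz[OF lip_f] std_dev_lipschitz[OF lip_g] std_dev_nonneg[OF g]
        lipschitz_on_nonneg[OF lip_f]
      by (intro mult_mono) auto
    then show ?thesis using CS by (simp add: field_simps)
  qed
  ultimately show ?thesis
    unfolding cov by blast
qed

end
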